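(* Let $G$ be a connected graph and $P$ an isometric path in $G$ of length at least $2$. For every $v\in V(G)\setminus V(P)$, we have $|S_P(v)|=1$ if and only if there exists a bypath $B$ of $P$ in $G$ such that $v\in V(B)$.
   Context: $d$ denotes distance in $G$. A path $P$ in $G$ is isometric if $d_P(x,y)=d_G(x,y)$ for all $x,y\in V(P)$. The wide shadow of $v\in V(G)$ on $P$ is $S_P(v)=\{y\in V(P): d(y,x)\le d(v,x)\text{ for all }x\in V(P)\}$. For a subgraph $H$ of $G$ and an isometric path $P=v_1v_2\cdots v_k$ in $H$, a bypath of $P$ in $H$ is a path $B=b_1b_2\cdots b_t$ with $t\ge3$ and $V(B)\subseteq V(H)$, such that $b_1=v_i$, $b_t=v_j$ for some $1\le i<j\le k$, $V(B)\cap V(P)=\{v_i,v_j\}$, and the path $v_1\cdots v_i b_2\cdots b_{t-1} v_j\cdots v_k$ is also an isometric path in $H$. (Here $H=G$.) *)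

theory Defs
  imports Main
begin

definition graph :: "'a set \<Rightarrow> ('a \<Rightarrow> 'a \<Rightarrow> bool) \<Rightarrow> bool" where
  "graph V E \<longleftrightarrow> finite V \<and> (\<forall>x y. E x y \<longrightarrow> x \<in> V \<and> y \<in> V \<and> E y x \<and> x \<noteq> y)"

definition walk :: "('a \<Rightarrow> 'a \<Rightarrow> bool) \<Rightarrow> 'a list \<Rightarrow> bool" where
  "walk E xs \<longleftrightarrow> xs \<noteq> [] \<and> (\<forall>i. Suc i < length xs \<longrightarrow> E (xs ! i) (xs ! Suc i))"

definition connected_graph :: "'a set \<Rightarrow> ('a \<Rightarrow> 'a \<Rightarrow> bool) \<Rightarrow> bool" where
  "connected_graph V E \<longleftrightarrow> graph V E \<and> V \<noteq> {} \<and>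
     (\<forall>x\<in>V. \<forall>y\<in>V. \<exists>xs. walk E xs \<and> hd xs = x \<and> last xs = y)"

definition dist :: "('a \<Rightarrow> 'a \<Rightarrow> bool) \<Rightarrow> 'a \<Rightarrow> 'a \<Rightarrow> nat" where
  "dist E x y = (LEAST n. \<exists>xs. walk E xs \<and> hd xs = x \<and> last xs = y \<and> length xs = Suc n)"

definition is_path :: "'a set \<Rightarrow> ('a \<Rightarrow> 'a \<Rightarrow> bool) \<Rightarrow> 'a list \<Rightarrow> bool" where
  "is_path V E P \<longleftrightarrow> walk E P \<and> distinct P \<and> set P \<subseteq> V"

definition path_edges :: "'a list \<Rightarrow> 'a \<Rightarrow> 'a \<Rightarrow> bool" where
  "path_edges P x y \<longleftrightarrow> (\<exists>i. Suc i < length P \<and> {x, y} = {P ! i, P ! Suc i})"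

definition isometric_path :: "'a set \<Rightarrow> ('a \<Rightarrow> 'a \<Rightarrow> bool) \<Rightarrow> 'a list \<Rightarrow> bool" where
  "isometric_path V E P \<longleftrightarrow> is_path V E P \<and>
     (\<forall>x\<in>set P. \<forall>y\<in>set P. dist (path_edges P) x y = dist E x y)"

definition wide_shadow :: "('a \<Rightarrow> 'a \<Rightarrow> bool) \<Rightarrow> 'a list \<Rightarrow> 'a \<Rightarrow> 'a set" where
  "wide_shadow E P v = {y \<in> set P. \<forall>x\<in>set P. dist E y x \<le> dist E v x}"

definition bypath :: "'a set \<Rightarrow> ('a \<Rightarrow> 'a \<Rightarrow> bool) \<Rightarrow> 'a list \<Rightarrow> 'a list \<Rightarrow> bool" where
  "bypath V E P B \<longleftrightarrow> is_path V E B \<and> length B \<ge> 3 \<and>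
     (\<exists>i j. i < j \<and> j < length P \<and> hd B = P ! i \<and> last B = P ! j \<and>
        set B \<inter> set P = {P ! i, P ! j} \<and>
        isometric_path V E (take i P @ B @ drop (Suc j) P))"

end

theory Submission
  imports Defs
begin

(* Let x and y be the ends of P and n its number of vertices, so d(x,y) = n - 1. Both sides of
   the equivalence say that v lies between x and y, i.e. d(x,v) + d(v,y) = d(x,y).
   If it does, the triangle inequality pins the shadow down to the single vertex of P at distance
   d(x,v) from x. Conversely, if the shadow is a single vertex P_m, its neighbours P_(m-1) and
   P_(m+1) are not in it, which yields indices k, k' with k + d(v,P_k) <= m <= k' - d(v,P_k'),
   and hence d(x,v) + d(v,y) <= n - 1.
   A bypath through v turns P into an isometric x-y path through v. Conversely, a shortest walk
   from x through v to y is a geodesic with the ends of P; its segment from the last vertex of P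
   before v to the first one after v is a bypath, because splicing it into P gives an x-y walk
   with n vertices. *)

definition reachable :: "('a \<Rightarrow> 'a \<Rightarrow> bool) \<Rightarrow> 'a \<Rightarrow> 'a \<Rightarrow> bool" where
  "reachable E x y \<longleftrightarrow> (\<exists>xs. walk E xs \<and> hd xs = x \<and> last xs = y)"

lemma walk_iff_successively: "walk E xs \<longleftrightarrow> xs \<noteq> [] \<and> successively E xs"
  unfolding walk_def successively_conv_nth by auto

lemma walk_append_tl:
  assumes "walk E xs" "walk E ys" "last xs = hd ys"
  shows "walk E (xs @ tl ys)" "hd (xs @ tl ys) = hd xs" "last (xs @ tl ys) = last ys"
    "length (xs @ tl ys) = length xs + length ys - 1"
proof -
  obtain y ys' where ys: "ys = y # ys'" and "xs \<noteq> []"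
    using assms(1,2) unfolding walk_def by (cases ys) auto
  with assms show "walk E (xs @ tl ys)"
    unfolding walk_iff_successively
    by (cases ys') (auto simp: successively_append_iff successively_Cons)
  show "hd (xs @ tl ys) = hd xs" "last (xs @ tl ys) = last ys"
    "length (xs @ tl ys) = length xs + length ys - 1"
    using \<open>xs \<noteq> []\<close> assms(3) ys by (cases ys'; auto)+
qed

lemma walk_segment:
  assumes "walk E xs" "i \<le> j" "j < length xs"
  shows "walk E (drop i (take (Suc j) xs))" "hd (drop i (take (Suc j) xs)) = xs ! i"
    "last (drop i (take (Suc j) xs)) = xs ! j" "length (drop i (take (Suc j) xs)) = Suc j - i"
  using assms by (auto simp: walk_def hd_drop_conv_nth last_conv_nth)

lemma reachable_segment:
  "walk E xs \<Longrightarrow> i \<le> j \<Longrightarrow> j < length xs \<Longrightarrow> reachable E (xs ! i) (xs ! j)"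
  unfolding reachable_def by (metis walk_segment(1-3))

lemma walk_rev:
  assumes "\<And>x y. E x y \<Longrightarrow> E y x" "walk E xs"
  shows "walk E (rev xs)"
  using assms unfolding walk_iff_successively by (auto elim: successively_mono)

lemma dist_le_length: "walk E xs \<Longrightarrow> dist E (hd xs) (last xs) \<le> length xs - 1"
  unfolding dist_def by (rule Least_le) (auto simp: walk_def)

lemma shortest_walk:
  assumes "reachable E x y"
  obtains xs where "walk E xs" "hd xs = x" "last xs = y" "length xs = Suc (dist E x y)"
proof -
  have "\<exists>n xs. walk E xs \<and> hd xs = x \<and> last xs = y \<and> length xs = Suc n"
    using assms unfolding reachable_def walk_def by (metis Suc_pred length_greater_0_conv)
  then have "\<exists>xs. walk E xs \<and> hd xs = x \<and> last xs = y \<and> length xs = Suc (dist E x y)"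
    unfolding dist_def by (rule LeastI_ex)
  then show ?thesis using that by blast
qed

lemma dist_nth_le:
  assumes "walk E xs" "i \<le> j" "j < length xs"
  shows "dist E (xs ! i) (xs ! j) \<le> j - i"
  using dist_le_length[OF walk_segment(1)[OF assms]] walk_segment(2-4)[OF assms] by simp

lemma dist_self: "dist E x x = 0"
  using dist_le_length[of E "[x]"] by (simp add: walk_def)

lemma dist_eq_0_imp_eq:
  assumes "reachable E x y" "dist E x y = 0"
  shows "x = y"
proof -
  obtain xs where "hd xs = x" "last xs = y" "length xs = Suc 0"
    using shortest_walk[OF assms(1)] assms(2) by metis
  then show ?thesis by (cases xs) auto
qed

lemma dist_triangle:
  assumes "reachable E x y" "reachable E y z"
  shows "dist E x z \<le> dist E x y + dist E y z"
proof -
  obtain xs where xs: "walk E xs" "hd xs = x" "last xs = y" "length xs = Suc (dist E x y)"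
    using shortest_walk[OF assms(1)] .
  obtain ys where ys: "walk E ys" "hd ys = y" "last ys = z" "length ys = Suc (dist E y z)"
    using shortest_walk[OF assms(2)] .
  have "last xs = hd ys" using xs ys by simp
  note xys = walk_append_tl[OF xs(1) ys(1) this]
  show ?thesis using dist_le_length[OF xys(1)] xys(2-4) xs ys by simp
qed

lemma dist_commute:
  assumes "\<And>x y. E x y \<Longrightarrow> E y x"
  shows "dist E x y = dist E y x"
proof -
  have rev: "\<exists>xs. walk E xs \<and> hd xs = b \<and> last xs = a \<and> length xs = n"
    if "walk E xs" "hd xs = a" "last xs = b" "length xs = n" for xs a b n
    using that walk_rev[OF assms that(1)]
    by (intro exI[of _ "rev xs"]) (auto simp: hd_rev last_rev walk_def)
  have "(\<lambda>n. \<exists>xs. walk E xs \<and> hd xs = x \<and> last xs = y \<and> length xs = Suc n)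
      = (\<lambda>n. \<exists>xs. walk E xs \<and> hd xs = y \<and> last xs = x \<and> length xs = Suc n)"
  proof (intro ext iffI)
    fix n
    show "\<exists>xs. walk E xs \<and> hd xs = y \<and> last xs = x \<and> length xs = Suc n"
      if "\<exists>xs. walk E xs \<and> hd xs = x \<and> last xs = y \<and> length xs = Suc n"
      using that rev by blast
    show "\<exists>xs. walk E xs \<and> hd xs = x \<and> last xs = y \<and> length xs = Suc n"
      if "\<exists>xs. walk E xs \<and> hd xs = y \<and> last xs = x \<and> length xs = Suc n"
      using that rev by blast
  qed
  then show ?thesis unfolding dist_def by simp
qed

lemma dist_lower_bound:
  fixes h :: "'a \<Rightarrow> nat"
  assumes "reachable E x y" "\<And>a b. E a b \<Longrightarrow> h b \<le> Suc (h a)"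
  shows "h y \<le> h x + dist E x y"
proof -
  have "h (last xs) \<le> h (hd xs) + (length xs - 1)" if "walk E xs" for xs
    using that
  proof (induction xs)
    case (Cons a xs)
    show ?case
    proof (cases xs)
      case (Cons b ys)
      with Cons.prems have "E a b" "walk E xs" by (auto simp: walk_iff_successively)
      then have "h b \<le> Suc (h a)" "h (last xs) \<le> h b + (length xs - 1)"
        using assms(2) Cons.IH \<open>xs = b # ys\<close> by auto
      then show ?thesis using \<open>xs = b # ys\<close> by simp
    qed simp
  qed (simp add: walk_def)
  moreover obtain xs where "walk E xs" "hd xs = x" "last xs = y" "length xs = Suc (dist E x y)"
    using shortest_walk[OF assms(1)] .
  ultimately show ?thesis by fastforce
qed

lemma graph_edge_commute: "graph V E \<Longrightarrow> E x y \<Longrightarrow> E y x"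
  unfolding graph_def by blast

lemma connected_graph_reachable:
  "connected_graph V E \<Longrightarrow> x \<in> V \<Longrightarrow> y \<in> V \<Longrightarrow> reachable E x y"
  unfolding connected_graph_def reachable_def by blast

lemma connected_graph_dist_commute: "connected_graph V E \<Longrightarrow> dist E x y = dist E y x"
  unfolding connected_graph_def using dist_commute graph_edge_commute by metis

lemma connected_graph_dist_triangle:
  "connected_graph V E \<Longrightarrow> x \<in> V \<Longrightarrow> y \<in> V \<Longrightarrow> z \<in> V \<Longrightarrow>
    dist E x z \<le> dist E x y + dist E y z"
  using dist_triangle connected_graph_reachable by metis

lemma walk_subset_vertices:
  assumes "graph V E" "walk E xs" "hd xs \<in> V"
  shows "set xs \<subseteq> V"
proof
  fix x assume "x \<in> set xs"
  then obtain k where k: "k < length xs" "x = xs ! k" by (auto simp: in_set_conv_nth)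
  show "x \<in> V"
  proof (cases k)
    case 0 then show ?thesis using k assms(2,3) by (auto simp: walk_def hd_conv_nth)
  next
    case (Suc k')
    then have "E (xs ! k') x" using k assms(2) unfolding walk_def by blast
    then show ?thesis using assms(1) unfolding graph_def by blast
  qed
qed

lemma path_edges_commute: "path_edges P x y \<Longrightarrow> path_edges P y x"
  unfolding path_edges_def by (auto simp: insert_commute)

lemma dist_path_edges:
  assumes "distinct P" "i \<le> j" "j < length P"
  shows "dist (path_edges P) (P ! i) (P ! j) = j - i"
proof (rule antisym)
  have "walk (path_edges P) P" using assms unfolding walk_def path_edges_def by auto
  then show "dist (path_edges P) (P ! i) (P ! j) \<le> j - i"
    using dist_nth_le assms(2,3) by blast
  define pos where "pos = inv_into {..<length P} ((!) P)"
  have pos: "pos (P ! k) = k" if "k < length P" for k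
    unfolding pos_def using that inj_on_nth[OF assms(1), of "{..<length P}"] by simp
  have "pos b \<le> Suc (pos a)" if "path_edges P a b" for a b
    using that pos unfolding path_edges_def by (auto simp: doubleton_eq_iff)
  then have "pos (P ! j) \<le> pos (P ! i) + dist (path_edges P) (P ! i) (P ! j)"
    by (rule dist_lower_bound[OF reachable_segment[OF \<open>walk (path_edges P) P\<close> assms(2,3)]])
  then show "j - i \<le> dist (path_edges P) (P ! i) (P ! j)"
    using pos assms by simp
qed

lemma isometric_path_dist:
  assumes "isometric_path V E P" "i < length P" "j < length P"
  shows "dist E (P ! i) (P ! j) = (if i \<le> j then j - i else i - j)"
proof -
  have "distinct P" using assms(1) unfolding isometric_path_def is_path_def by simp
  then have "dist (path_edges P) (P ! i) (P ! j) = (if i \<le> j then j - i else i - j)"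
    using dist_path_edges[of P i j] dist_path_edges[of P j i] assms(2,3)
      dist_commute[of "path_edges P", OF path_edges_commute]
    by (cases "i \<le> j") auto
  moreover have "dist (path_edges P) (P ! i) (P ! j) = dist E (P ! i) (P ! j)"
    using assms unfolding isometric_path_def by simp
  ultimately show ?thesis by simp
qed

lemma isometric_path_ends:
  assumes "isometric_path V E P"
  shows "P \<noteq> []" "hd P = P ! 0" "last P = P ! (length P - 1)"
    "dist E (hd P) (last P) = length P - 1"
proof -
  show "P \<noteq> []" using assms unfolding isometric_path_def is_path_def walk_def by simp
  then show "hd P = P ! 0" "last P = P ! (length P - 1)"
    by (simp_all add: hd_conv_nth last_conv_nth)
  then show "dist E (hd P) (last P) = length P - 1"
    using isometric_path_dist[OF assms] \<open>P \<noteq> []\<close> by simp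
qed

definition between :: "('a \<Rightarrow> 'a \<Rightarrow> bool) \<Rightarrow> 'a \<Rightarrow> 'a \<Rightarrow> 'a \<Rightarrow> bool" where
  "between E x v y \<longleftrightarrow> dist E x v + dist E v y = dist E x y"

lemma isometric_path_between:
  assumes "isometric_path V E Q" "v \<in> set Q"
  shows "between E (hd Q) v (last Q)"
proof -
  obtain p where p: "p < length Q" "v = Q ! p" using assms(2) by (auto simp: in_set_conv_nth)
  then have "0 < length Q" "length Q - 1 < length Q" by auto
  then show ?thesis
    unfolding between_def isometric_path_ends[OF assms(1)]
    using isometric_path_dist[OF assms(1)] p by auto
qed

definition geodesic :: "('a \<Rightarrow> 'a \<Rightarrow> bool) \<Rightarrow> 'a list \<Rightarrow> bool" where
  "geodesic E Q \<longleftrightarrow> walk E Q \<and> length Q = Suc (dist E (hd Q) (last Q))"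

lemma geodesic_dist:
  assumes "geodesic E Q" "a \<le> b" "b < length Q"
  shows "dist E (Q ! a) (Q ! b) = b - a"
proof (rule antisym)
  have Q: "walk E Q" "length Q = Suc (dist E (hd Q) (last Q))"
    using assms(1) unfolding geodesic_def by auto
  then show "dist E (Q ! a) (Q ! b) \<le> b - a"
    using dist_nth_le assms(2,3) by blast
  define n where "n = length Q"
  have ends: "hd Q = Q ! 0" "last Q = Q ! (n - 1)"
    using assms(3) unfolding n_def by (cases Q; auto simp: hd_conv_nth last_conv_nth)+
  have le: "a \<le> n - 1" "b \<le> n - 1" "n - 1 < n" using assms(2,3) n_def by auto
  have reach: "reachable E (Q ! k) (Q ! l)" if "k \<le> l" "l \<le> n - 1" for k l
    using reachable_segment[OF Q(1) that(1)] that(2) le(3) n_def by simp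
  have "dist E (Q ! 0) (Q ! (n - 1)) \<le> dist E (Q ! 0) (Q ! a) + dist E (Q ! a) (Q ! (n - 1))"
    "dist E (Q ! a) (Q ! (n - 1)) \<le> dist E (Q ! a) (Q ! b) + dist E (Q ! b) (Q ! (n - 1))"
    using le assms(2) by (intro dist_triangle reach; simp)+
  moreover have "dist E (Q ! 0) (Q ! a) \<le> a - 0" "dist E (Q ! b) (Q ! (n - 1)) \<le> n - 1 - b"
    using le n_def by (intro dist_nth_le[OF Q(1)]; simp)+
  moreover have "dist E (Q ! 0) (Q ! (n - 1)) = n - 1"
    using Q(2) ends n_def by simp
  ultimately show "b - a \<le> dist E (Q ! a) (Q ! b)"
    using le by linarith
qed

lemma geodesic_distinct:
  assumes "geodesic E Q"
  shows "distinct Q"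
  unfolding distinct_conv_nth
proof (intro allI impI)
  have neq: "Q ! a \<noteq> Q ! b" if "a < b" "b < length Q" for a b
    using geodesic_dist[OF assms, of a b] dist_self[of E "Q ! a"] that by auto
  fix a b assume "a < length Q" "b < length Q" "a \<noteq> b"
  then show "Q ! a \<noteq> Q ! b" using neq[of a b] neq[of b a] by (cases "a < b") auto
qed

lemma geodesic_isometric_path:
  assumes "graph V E" "geodesic E Q" "hd Q \<in> V"
  shows "isometric_path V E Q"
proof -
  have Q: "walk E Q" "distinct Q" "set Q \<subseteq> V"
    using assms geodesic_distinct walk_subset_vertices unfolding geodesic_def by blast+
  have dist_eq: "dist (path_edges Q) (Q ! a) (Q ! b) = dist E (Q ! a) (Q ! b)"
    if "a < length Q" "b < length Q" for a b
  proof (cases "a \<le> b")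
    case True
    then show ?thesis using that dist_path_edges[OF Q(2)] geodesic_dist[OF assms(2)] by simp
  next
    case False
    then show ?thesis using that dist_path_edges[OF Q(2)] geodesic_dist[OF assms(2)]
        dist_commute[of "path_edges Q", OF path_edges_commute]
        dist_commute[of E, OF graph_edge_commute[OF assms(1)]]
      by (metis nat_le_linear)
  qed
  then show ?thesis
    using Q unfolding isometric_path_def is_path_def by (metis in_set_conv_nth)
qed

lemma geodesic_through:
  assumes "reachable E x v" "reachable E v y" "between E x v y"
  obtains Q where "geodesic E Q" "hd Q = x" "last Q = y" "Q ! dist E x v = v"
proof -
  obtain xs where xs: "walk E xs" "hd xs = x" "last xs = v" "length xs = Suc (dist E x v)"
    using shortest_walk[OF assms(1)] .
  obtain ys where ys: "walk E ys" "hd ys = v" "last ys = y" "length ys = Suc (dist E v y)"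
    using shortest_walk[OF assms(2)] .
  have "last xs = hd ys" using xs ys by simp
  note Q = walk_append_tl[OF xs(1) ys(1) this]
  have "xs \<noteq> []" using xs(4) by auto
  then have "xs ! dist E x v = v" using xs(3,4) last_conv_nth[of xs] by simp
  then have "(xs @ tl ys) ! dist E x v = v" using xs(4) by (simp add: nth_append)
  moreover have "geodesic E (xs @ tl ys)"
    using Q xs ys assms(3) unfolding geodesic_def between_def by simp
  ultimately show ?thesis using that Q(2,3) xs(2) ys(3) by blast
qed

lemma walk_splice:
  assumes "walk E P" "walk E B" "i \<le> j" "j < length P" "hd B = P ! i" "last B = P ! j"
  shows "walk E (take i P @ B @ drop (Suc j) P)"
    "hd (take i P @ B @ drop (Suc j) P) = hd P" "last (take i P @ B @ drop (Suc j) P) = last P"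
    "length (take i P @ B @ drop (Suc j) P) = i + length B + (length P - Suc j)"
proof -
  define S where "S = drop i (take (Suc j) P)"
  have S: "S \<noteq> []" "hd S = P ! i" "last S = P ! j"
    using walk_segment[OF assms(1,3,4)] unfolding S_def walk_def by auto
  have "P = take i P @ S @ drop (Suc j) P"
    unfolding S_def using assms(3)
    by (metis append.assoc append_take_drop_id le_SucI take_take min_absorb1)
  then have "successively E (take i P @ S @ drop (Suc j) P)"
    using assms(1) unfolding walk_iff_successively by metis
  then show "walk E (take i P @ B @ drop (Suc j) P)"
    using assms(2,5,6) S unfolding walk_iff_successively by (auto simp: successively_append_iff)
  have "B \<noteq> []" "P \<noteq> []" using assms(2,4) unfolding walk_def by auto
  then show "hd (take i P @ B @ drop (Suc j) P) = hd P"
    using assms(5) by (cases i) (auto simp: hd_conv_nth nth_append)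
  show "last (take i P @ B @ drop (Suc j) P) = last P"
  proof (cases "Suc j = length P")
    case True
    then have "last P = P ! j" using last_conv_nth[OF \<open>P \<noteq> []\<close>] by (metis diff_Suc_1)
    with True show ?thesis using assms(6) \<open>B \<noteq> []\<close> by simp
  qed (use assms(4) in simp)
  show "length (take i P @ B @ drop (Suc j) P) = i + length B + (length P - Suc j)"
    using assms(3,4) by simp
qed

lemma nth_mem_wide_shadow_iff:
  assumes "isometric_path V E P" "m < length P"
  shows "P ! m \<in> wide_shadow E P v \<longleftrightarrow>
    (\<forall>k<length P. m \<le> k + dist E v (P ! k) \<and> k \<le> m + dist E v (P ! k))"
proof -
  have "dist E (P ! m) (P ! k) \<le> d \<longleftrightarrow> m \<le> k + d \<and> k \<le> m + d" if "k < length P" for k d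
    using isometric_path_dist[OF assms(1,2) that] by auto
  then show ?thesis
    using assms(2) unfolding wide_shadow_def by (simp add: all_set_conv_all_nth)
qed

lemma wide_shadow_eq_if_between:
  assumes G: "connected_graph V E" and P: "isometric_path V E P"
    and "v \<in> V" "between E (hd P) v (last P)"
  shows "wide_shadow E P v = {P ! dist E (hd P) v}"
proof -
  define n where "n = length P"
  define a where "a = dist E (hd P) v"
  define f where "f k = dist E v (P ! k)" for k
  note ends = isometric_path_ends[OF P, folded n_def]
  have "0 < n" using ends(1) n_def by simp
  have a: "a = f 0" "a + f (n - 1) = n - 1"
    using assms(4) ends connected_graph_dist_commute[OF G]
    unfolding a_def f_def between_def by auto
  have shadow_iff: "P ! m \<in> wide_shadow E P v \<longleftrightarrow> (\<forall>k<n. m \<le> k + f k \<and> k \<le> m + f k)"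
    if "m < n" for m
    using nth_mem_wide_shadow_iff[OF P that[unfolded n_def]] unfolding n_def f_def .
  have PV: "P ! k \<in> V" if "k < n" for k
    using P that unfolding isometric_path_def is_path_def n_def by auto
  have "a \<le> k + f k \<and> k \<le> a + f k" if "k < n" for k
  proof -
    have "dist E (P ! 0) (P ! k) \<le> dist E (P ! 0) v + dist E v (P ! k)"
      "dist E (P ! k) (P ! (n - 1)) \<le> dist E (P ! k) v + dist E v (P ! (n - 1))"
      using connected_graph_dist_triangle[OF G] PV that \<open>v \<in> V\<close> \<open>0 < n\<close> by auto
    moreover have "dist E (P ! 0) (P ! k) = k" "dist E (P ! k) (P ! (n - 1)) = n - 1 - k"
      using isometric_path_dist[OF P, of 0 k] isometric_path_dist[OF P, of k "n - 1"] that ends(1)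
      unfolding n_def by auto
    moreover have "dist E (P ! 0) v = a" "dist E (P ! k) v = f k"
      using ends(2) connected_graph_dist_commute[OF G] unfolding a_def f_def by auto
    ultimately show ?thesis using a(2) that unfolding f_def by linarith
  qed
  moreover have "a < n" using a(2) \<open>0 < n\<close> by linarith
  ultimately have "P ! a \<in> wide_shadow E P v" using shadow_iff by blast
  moreover have "m = a" if "m < n" "P ! m \<in> wide_shadow E P v" for m
  proof -
    have "m \<le> 0 + f 0" "n - 1 \<le> m + f (n - 1)"
      using that shadow_iff[of m] \<open>0 < n\<close> by auto
    then show "m = a" using a by linarith
  qed
  moreover have "\<exists>m<n. y = P ! m" if "y \<in> wide_shadow E P v" for y
    using that unfolding wide_shadow_def n_def by (auto simp: in_set_conv_nth)
  ultimately show ?thesis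
    unfolding a_def[symmetric] by blast
qed

lemma unique_center_bracketed:
  fixes f :: "nat \<Rightarrow> nat"
  assumes center: "\<And>l. l < n \<Longrightarrow> (\<forall>k<n. l \<le> k + f k \<and> k \<le> l + f k) \<longleftrightarrow> l = m"
    and "m < n" "2 \<le> n" "\<And>k. k < n \<Longrightarrow> 0 < f k"
  obtains k k' where "k < n" "k + f k \<le> m" "k' < n" "m + f k' \<le> k'"
proof -
  have m: "m \<le> k + f k \<and> k \<le> m + f k" if "k < n" for k
    using center[OF \<open>m < n\<close>] that by blast
  have left: "\<exists>k<n. k + f k \<le> m" if m_less: "m + 1 < n"
  proof -
    obtain k where "k < n" "\<not> (m + 1 \<le> k + f k \<and> k \<le> m + 1 + f k)"
      using center[OF m_less] by auto
    then show ?thesis using m by fastforce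
  qed
  have right: "\<exists>k<n. m + f k \<le> k" if m_pos: "0 < m"
  proof -
    obtain k where "k < n" "\<not> (m - 1 \<le> k + f k \<and> k \<le> m - 1 + f k)"
      using center[of "m - 1"] \<open>m < n\<close> m_pos by fastforce
    then show ?thesis using m m_pos by fastforce
  qed
  have "0 < m" using left assms(3,4) by fastforce
  moreover have "m + 1 < n" using right[OF \<open>0 < m\<close>] assms(4) \<open>m < n\<close> by fastforce
  ultimately show ?thesis using left right that by blast
qed

lemma between_if_card_wide_shadow_eq_1:
  assumes G: "connected_graph V E" and P: "isometric_path V E P"
    and "2 \<le> length P" "v \<in> V - set P" "card (wide_shadow E P v) = 1"
  shows "between E (hd P) v (last P)"
proof -
  define n where "n = length P"
  define f where "f k = dist E v (P ! k)" for k
  note ends = isometric_path_ends[OF P, folded n_def]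
  have PV: "P ! k \<in> V" if "k < n" for k
    using P that unfolding isometric_path_def is_path_def n_def by auto
  have f_pos: "0 < f k" if "k < n" for k
  proof -
    have "reachable E v (P ! k)"
      using connected_graph_reachable[OF G] PV[OF that] assms(4) by blast
    moreover have "v \<noteq> P ! k" using assms(4) that n_def by auto
    ultimately show ?thesis using dist_eq_0_imp_eq unfolding f_def by (metis gr0I)
  qed
  obtain y where "wide_shadow E P v = {y}" using assms(5) card_1_singletonE by blast
  moreover have "wide_shadow E P v \<subseteq> set P" unfolding wide_shadow_def by blast
  ultimately obtain m where m: "m < n" "wide_shadow E P v = {P ! m}"
    unfolding n_def by (auto simp: in_set_conv_nth)
  have "distinct P" using P unfolding isometric_path_def is_path_def by simp
  then have "(\<forall>k<n. l \<le> k + f k \<and> k \<le> l + f k) \<longleftrightarrow> l = m" if "l < n" for l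
    using nth_mem_wide_shadow_iff[OF P, of l v] nth_eq_iff_index_eq m that
    unfolding n_def f_def by auto
  then obtain k k' where k: "k < n" "k + f k \<le> m" and k': "k' < n" "m + f k' \<le> k'"
    using unique_center_bracketed m(1) assms(3) f_pos unfolding n_def by metis
  have "dist E (P ! 0) v \<le> dist E (P ! 0) (P ! k) + dist E (P ! k) v"
    "dist E v (P ! (n - 1)) \<le> dist E v (P ! k') + dist E (P ! k') (P ! (n - 1))"
    "dist E (P ! 0) (P ! (n - 1)) \<le> dist E (P ! 0) v + dist E v (P ! (n - 1))"
    using connected_graph_dist_triangle[OF G] PV k(1) k'(1) assms(4) by auto
  moreover have "dist E (P ! 0) (P ! k) = k" "dist E (P ! k') (P ! (n - 1)) = n - 1 - k'"
    using isometric_path_dist[OF P, of 0 k] isometric_path_dist[OF P, of k' "n - 1"] k k' ends(1)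
    unfolding n_def by auto
  moreover have "dist E (P ! k) v = f k" "dist E v (P ! k') = f k'"
    using connected_graph_dist_commute[OF G] unfolding f_def by auto
  ultimately show ?thesis
    unfolding between_def using ends k k' by (simp, linarith)
qed

lemma card_wide_shadow_eq_1_iff_between:
  assumes "connected_graph V E" "isometric_path V E P" "2 \<le> length P" "v \<in> V - set P"
  shows "card (wide_shadow E P v) = 1 \<longleftrightarrow> between E (hd P) v (last P)"
proof
  show "between E (hd P) v (last P)" if "card (wide_shadow E P v) = 1"
    using between_if_card_wide_shadow_eq_1[OF assms that] .
  show "card (wide_shadow E P v) = 1" if "between E (hd P) v (last P)"
    using wide_shadow_eq_if_between[OF assms(1,2) _ that] assms(4) by simp
qed

lemma isometric_path_splice:
  assumes G: "graph V E" and P: "isometric_path V E P" and B: "walk E B"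
    and "i \<le> j" "j < length P" "hd B = P ! i" "last B = P ! j" "length B = Suc j - i"
  shows "isometric_path V E (take i P @ B @ drop (Suc j) P)"
proof (rule geodesic_isometric_path[OF G])
  have "walk E P" and "hd P \<in> V"
    using P isometric_path_ends(1)[OF P] unfolding isometric_path_def is_path_def by auto
  note splice = walk_splice[OF this(1) B assms(4-7)]
  show "geodesic E (take i P @ B @ drop (Suc j) P)"
    using splice assms(4,5,8) isometric_path_ends(4)[OF P] unfolding geodesic_def by simp
  show "hd (take i P @ B @ drop (Suc j) P) \<in> V"
    using splice(2) \<open>hd P \<in> V\<close> by simp
qed

lemma between_if_bypath:
  assumes "isometric_path V E P" "bypath V E P B" "v \<in> set B"
  shows "between E (hd P) v (last P)"
proof -
  obtain i j where ij: "i < j" "j < length P" "hd B = P ! i" "last B = P ! j"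
    and Q: "isometric_path V E (take i P @ B @ drop (Suc j) P)"
    using assms(2) unfolding bypath_def by blast
  have "walk E P" "walk E B"
    using assms(1,2) unfolding bypath_def isometric_path_def is_path_def by auto
  note splice = walk_splice[OF this less_imp_le[OF ij(1)] ij(2-4)]
  have "v \<in> set (take i P @ B @ drop (Suc j) P)" using assms(3) by simp
  from isometric_path_between[OF Q this] show ?thesis using splice(2,3) by simp
qed

lemma geodesic_length_eq_isometric_path:
  assumes "isometric_path V E P" "geodesic E Q" "hd Q = hd P" "last Q = last P"
  shows "length Q = length P"
  using assms isometric_path_ends[OF assms(1)] unfolding geodesic_def by simp

lemma geodesic_nth_mem_isometric_path:
  assumes P: "isometric_path V E P" and Q: "geodesic E Q" "hd Q = hd P" "last Q = last P"
    and "t < length Q" "Q ! t \<in> set P"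
  shows "Q ! t = P ! t"
proof -
  obtain s where s: "s < length P" "Q ! t = P ! s" using assms(6) by (auto simp: in_set_conv_nth)
  have "Q ! 0 = P ! 0"
    using Q(2) isometric_path_ends[OF P] assms(5) by (cases Q) auto
  then have "t = dist E (P ! 0) (P ! s)"
    using geodesic_dist[OF Q(1), of 0 t] assms(5) s(2) by simp
  also have "\<dots> = s"
    using isometric_path_dist[OF P, of 0 s] s(1) isometric_path_ends(1)[OF P] by simp
  finally show ?thesis using s(2) by simp
qed

lemma maximal_gap_around:
  fixes S :: "nat \<Rightarrow> bool"
  assumes "S 0" "S m" "\<not> S p" "p \<le> m"
  obtains i j where "i < p" "p < j" "j \<le> m" "S i" "S j" "\<forall>t. i < t \<and> t < j \<longrightarrow> \<not> S t"
proof -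
  define i where "i = Max {t. t < p \<and> S t}"
  define j where "j = Min {t. p < t \<and> t \<le> m \<and> S t}"
  have p: "0 < p" "p < m" using assms by (auto intro: gr0I le_neq_implies_less)
  have "i \<in> {t. t < p \<and> S t}" "j \<in> {t. p < t \<and> t \<le> m \<and> S t}"
    unfolding i_def j_def using assms(1,2) p by (intro Max_in Min_in; auto)+
  moreover have "t \<le> i" if "t < p" "S t" for t
    unfolding i_def using that by (intro Max_ge) auto
  moreover have "j \<le> t" if "p < t" "t \<le> m" "S t" for t
    unfolding j_def using that by (intro Min_le) auto
  ultimately have i: "i < p" "S i" "\<And>t. t < p \<Longrightarrow> S t \<Longrightarrow> t \<le> i"
    and j: "p < j" "j \<le> m" "S j" "\<And>t. p < t \<Longrightarrow> t \<le> m \<Longrightarrow> S t \<Longrightarrow> j \<le> t"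
    by auto
  have "\<not> S t" if "i < t" "t < j" for t
    using i(3)[of t] j(2) j(4)[of t] assms(3) that by (cases "t < p"; cases "t = p"; auto)
  then show ?thesis using that i(1,2) j(1-3) by blast
qed

lemma set_segment_inter_eq_ends:
  assumes "i \<le> j" "j < length xs" "xs ! i \<in> A" "xs ! j \<in> A"
    and gap: "\<forall>t. i < t \<and> t < j \<longrightarrow> xs ! t \<notin> A"
  shows "set (drop i (take (Suc j) xs)) \<inter> A = {xs ! i, xs ! j}"
proof (intro equalityI subsetI)
  fix x assume x: "x \<in> set (drop i (take (Suc j) xs)) \<inter> A"
  then obtain r where r: "r < Suc j - i" "x = xs ! (i + r)"
    using assms(1,2) by (auto simp: in_set_conv_nth)
  then have "\<not> (i < i + r \<and> i + r < j)" using gap x by blast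
  then have "i + r = i \<or> i + r = j" using r(1) assms(1) by linarith
  then show "x \<in> {xs ! i, xs ! j}" using r(2) by auto
next
  fix x assume "x \<in> {xs ! i, xs ! j}"
  moreover have "xs ! i \<in> set (drop i (take (Suc j) xs))"
    using assms(1,2) by (auto simp: in_set_conv_nth intro!: exI[of _ 0])
  moreover have "xs ! j \<in> set (drop i (take (Suc j) xs))"
    using assms(1,2) by (auto simp: in_set_conv_nth intro!: exI[of _ "j - i"])
  ultimately show "x \<in> set (drop i (take (Suc j) xs)) \<inter> A" using assms(3,4) by blast
qed

lemma bypath_of_geodesic_segment:
  assumes G: "graph V E" and P: "isometric_path V E P"
    and Q: "geodesic E Q" "hd Q = hd P" "last Q = last P"
    and ij: "i + 2 \<le> j" "j < length Q" "Q ! i \<in> set P" "Q ! j \<in> set P"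
    and gap: "\<forall>t. i < t \<and> t < j \<longrightarrow> Q ! t \<notin> set P"
  shows "bypath V E P (drop i (take (Suc j) Q))"
proof -
  define B where "B = drop i (take (Suc j) Q)"
  have n: "length Q = length P" by (rule geodesic_length_eq_isometric_path[OF P Q])
  have ends: "Q ! i = P ! i" "Q ! j = P ! j"
    using geodesic_nth_mem_isometric_path[OF P Q] ij by auto
  have "walk E Q" using Q(1) unfolding geodesic_def by simp
  have "hd P \<in> V"
    using P isometric_path_ends(1)[OF P] unfolding isometric_path_def is_path_def by auto
  have "i \<le> j" using ij(1) by simp
  note seg = walk_segment[OF \<open>walk E Q\<close> this ij(2), folded B_def, unfolded ends]
  have "distinct B" unfolding B_def using geodesic_distinct[OF Q(1)] by simp
  moreover have "set B \<subseteq> V"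
  proof -
    have "set B \<subseteq> set Q" unfolding B_def by (meson set_drop_subset set_take_subset subset_trans)
    then show ?thesis using walk_subset_vertices[OF G \<open>walk E Q\<close>] Q(2) \<open>hd P \<in> V\<close> by simp
  qed
  moreover have "set B \<inter> set P = {P ! i, P ! j}"
    using set_segment_inter_eq_ends[OF \<open>i \<le> j\<close> ij(2-4) gap] ends unfolding B_def by simp
  moreover have "isometric_path V E (take i P @ B @ drop (Suc j) P)"
    using isometric_path_splice[OF G P seg(1) \<open>i \<le> j\<close> _ seg(2-4)] ij(2) n by simp
  moreover have "i < j" "j < length P" "3 \<le> length B" using ij(1,2) n seg(4) by simp_all
  ultimately have "bypath V E P B"
    unfolding bypath_def is_path_def using seg(1-3) by blast
  then show ?thesis unfolding B_def .
qed

lemma bypath_if_between: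
  assumes G: "connected_graph V E" and P: "isometric_path V E P"
    and v: "v \<in> V - set P" "between E (hd P) v (last P)"
  shows "\<exists>B. bypath V E P B \<and> v \<in> set B"
proof -
  note ends = isometric_path_ends[OF P]
  have "hd P \<in> V" "last P \<in> V"
    using P ends(1) unfolding isometric_path_def is_path_def by auto
  then have "reachable E (hd P) v" "reachable E v (last P)"
    using connected_graph_reachable[OF G] v(1) by auto
  then obtain Q where Q: "geodesic E Q" "hd Q = hd P" "last Q = last P"
    and v_nth: "Q ! dist E (hd P) v = v"
    by (rule geodesic_through[OF _ _ v(2)])
  define p where "p = dist E (hd P) v"
  define n where "n = length Q"
  have n: "n = length P" unfolding n_def by (rule geodesic_length_eq_isometric_path[OF P Q])
  have "p \<le> n - 1" using v(2) ends(4) n unfolding p_def between_def by linarith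
  moreover have "Q ! 0 = hd P" "Q ! (n - 1) = last P"
  proof -
    have "Q \<noteq> []" using n ends(1) n_def by auto
    then show "Q ! 0 = hd P" "Q ! (n - 1) = last P"
      using Q(2,3) unfolding n_def by (simp_all add: hd_conv_nth last_conv_nth)
  qed
  ultimately obtain i j where ij: "i < p" "p < j" "j \<le> n - 1" "Q ! i \<in> set P" "Q ! j \<in> set P"
    "\<forall>t. i < t \<and> t < j \<longrightarrow> Q ! t \<notin> set P"
    using maximal_gap_around[of "\<lambda>t. Q ! t \<in> set P" "n - 1" p] v(1) v_nth ends(1)
    unfolding p_def by auto
  have "0 < n" using ends(1) n by simp
  then have "j < length Q" using ij(3) n_def by linarith
  then have "bypath V E P (drop i (take (Suc j) Q))"
    using bypath_of_geodesic_segment[OF _ P Q] G ij unfolding connected_graph_def by simp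
  moreover have "v \<in> set (drop i (take (Suc j) Q))"
    using ij(1,2) \<open>j < length Q\<close> v_nth unfolding p_def[symmetric]
    by (auto simp: in_set_conv_nth intro!: exI[of _ "p - i"])
  ultimately show ?thesis by blast
qed

theorem lemma2p8:
  fixes V :: "'a set" and E :: "'a \<Rightarrow> 'a \<Rightarrow> bool" and P :: "'a list" and v :: 'a
  assumes "connected_graph V E"
    and "isometric_path V E P"
    and "length P \<ge> 3"
    and "v \<in> V - set P"
  shows "card (wide_shadow E P v) = 1 \<longleftrightarrow> (\<exists>B. bypath V E P B \<and> v \<in> set B)"
proof -
  have "2 \<le> length P" using assms(3) by simp
  have "card (wide_shadow E P v) = 1 \<longleftrightarrow> between E (hd P) v (last P)"
    using card_wide_shadow_eq_1_iff_between[OF assms(1,2) \<open>2 \<le> length P\<close> assms(4)] .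
  also have "\<dots> \<longleftrightarrow> (\<exists>B. bypath V E P B \<and> v \<in> set B)"
    using between_if_bypath[OF assms(2)] bypath_if_between[OF assms(1,2,4)] by blast
  finally show ?thesis .
qed

end
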